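(* Let $\star\in\{\boxtimes,\circ\}$, $k$ a positive integer, $G,H$ graphs of orders $n_G,n_H$, $M_G\subseteq E_G$, $M_H\subseteq E_H$, and let $u_G,u_H$ be the numbers of $M_G$-unmatched vertices of $G$ and $M_H$-unmatched vertices of $H$. If $F_{\circledast}(M_G,M_H)$ is a $k$-matching of $G\star H$, then $F_{\circledast}(M_G,M_H)\in\mathcal{W}_k(G\star H,M_G,M_H)$ and $|F_{\circledast}(M_G,M_H)|\ge|M|$ for all $M\in\mathcal{W}_k(G\star H,M_G,M_H)$. Moreover, if $M_G,M_H$ satisfy one of the conditions (M1)–(M4) below, then every maximum-cardinality element $M^*$ of $\mathcal{W}_k(G\star H,M_G,M_H)$ satisfies $|M^*|=\frac{k}{2}(n_Gn_H-u_Gu_H)$. Conditions: (M1)(a) $M_G$ perfect $k$-matching of $G$ and $M_H$ non-empty $1$-matching of $H$, or (M1)(b) $M_G$ non-empty $k$-matching of $G$ and $M_H=\emptyset$; (M2)(a) $M_G$ non-empty $1$-matching of $G$ and $M_H$ perfect $k$-matching of $H$, or (M2)(b) $M_G=\emptyset$ and $M_H$ non-empty $k$-matching of $H$; (M3) $k=1$ and $M_G,M_H$ are $1$-matchings; (M4) $M_G$ perfect $k_G$-matching and $M_H$ perfect $k_H$-matching with positive integers $k_Gk_H=k$.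
   Context: Graphs are finite, simple, undirected, with non-empty vertex set. For a positive integer $k$, a $k$-matching of $G=(V,E)$ is a set $M\subseteq E$ such that every vertex is incident to either $0$ or exactly $k$ edges of $M$; a vertex incident to no edge of $M$ is $M$-unmatched; $M$ is perfect if there are no unmatched vertices. Products on $V_G\times V_H$: in $G\boxtimes H$, $(g,h)\sim(g',h')$ iff (i) $\{g,g'\}\in E_G$, $h=h'$; or (ii) $g=g'$, $\{h,h'\}\in E_H$; or (iii) $\{g,g'\}\in E_G$ and $\{h,h'\}\in E_H$; in $G\circ H$ iff $\{g,g'\}\in E_G$ or (ii). With $U_G,U_H$ the unmatched vertex sets: $F_{\ast}(M_G,M_H)=\{\{(g,h),(g',h')\}:\{g,g'\}\in M_G,\{h,h'\}\in M_H\}$, $M^{U}_G=\{\{(u,h),(u,h')\}:u\in U_G,\{h,h'\}\in M_H\}$, $M^{U}_H=\{\{(g,u),(g',u)\}:u\in U_H,\{g,g'\}\in M_G\}$, $F_{\circledast}(M_G,M_H)=F_{\ast}(M_G,M_H)\cup M^{U}_G\cup M^{U}_H$. Projections: for an edge $e=\{(g,h),(g',h')\}$, $p_G(e)=\{g,g'\}$ if $g\ne g'$ and $p_G(e)=g$ if $g=g'$; similarly $p_H(e)$. A set $M\subseteq E_{G\star H}$ is weak-homomorphism preserving w.r.t. $M_G,M_H$ if $p_G(e)\in M_G\cup V_G$ and $p_H(e)\in M_H\cup V_H$ for all $e\in M$. $\mathcal{W}_k(G\star H,M_G,M_H)$ is the set of all $k$-matchings of $G\star H$ that are weak-homomorphism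 preserving w.r.t. $M_G,M_H$. *)

theory Defs
  imports "HOL-Library.Library"
begin

definition graph :: "'a set \<Rightarrow> 'a set set \<Rightarrow> bool" where
  "graph V E \<longleftrightarrow> finite V \<and> V \<noteq> {} \<and>
     (\<forall>e\<in>E. \<exists>x y. x \<noteq> y \<and> x \<in> V \<and> y \<in> V \<and> e = {x, y})"

definition k_matching :: "nat \<Rightarrow> 'a set \<Rightarrow> 'a set set \<Rightarrow> 'a set set \<Rightarrow> bool" where
  "k_matching k V E M \<longleftrightarrow> M \<subseteq> E \<and>
     (\<forall>v\<in>V. card {e\<in>M. v \<in> e} = 0 \<or> card {e\<in>M. v \<in> e} = k)"

definition unmatched :: "'a set \<Rightarrow> 'a set set \<Rightarrow> 'a set" where
  "unmatched V M = {v\<in>V. \<forall>e\<in>M. v \<notin> e}"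

definition perfect_k_matching :: "nat \<Rightarrow> 'a set \<Rightarrow> 'a set set \<Rightarrow> 'a set set \<Rightarrow> bool" where
  "perfect_k_matching k V E M \<longleftrightarrow> k_matching k V E M \<and> unmatched V M = {}"

definition strong_edges ::
  "'a set \<Rightarrow> 'a set set \<Rightarrow> 'b set \<Rightarrow> 'b set set \<Rightarrow> ('a \<times> 'b) set set" where
  "strong_edges VG EG VH EH =
     {{(g,h),(g',h')} | g h g' h'. g \<in> VG \<and> g' \<in> VG \<and> h \<in> VH \<and> h' \<in> VH \<and>
        (({g,g'} \<in> EG \<and> h = h') \<or> (g = g' \<and> {h,h'} \<in> EH) \<or>
         ({g,g'} \<in> EG \<and> {h,h'} \<in> EH))}"

definition lex_edges ::
  "'a set \<Rightarrow> 'a set set \<Rightarrow> 'b set \<Rightarrow> 'b set set \<Rightarrow> ('a \<times> 'b) set set" where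
  "lex_edges VG EG VH EH =
     {{(g,h),(g',h')} | g h g' h'. g \<in> VG \<and> g' \<in> VG \<and> h \<in> VH \<and> h' \<in> VH \<and>
        ({g,g'} \<in> EG \<or> (g = g' \<and> {h,h'} \<in> EH))}"

datatype product_kind = Strong | Lex

fun prod_edges :: "product_kind \<Rightarrow>
    'a set \<Rightarrow> 'a set set \<Rightarrow> 'b set \<Rightarrow> 'b set set \<Rightarrow> ('a \<times> 'b) set set" where
  "prod_edges Strong VG EG VH EH = strong_edges VG EG VH EH"
| "prod_edges Lex VG EG VH EH = lex_edges VG EG VH EH"

definition F_ast :: "'a set set \<Rightarrow> 'b set set \<Rightarrow> ('a \<times> 'b) set set" where
  "F_ast MG MH = {{(g,h),(g',h')} | g h g' h'. {g,g'} \<in> MG \<and> {h,h'} \<in> MH}"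

definition F_circ ::
  "'a set \<Rightarrow> 'a set set \<Rightarrow> 'b set \<Rightarrow> 'b set set \<Rightarrow> ('a \<times> 'b) set set" where
  "F_circ VG MG VH MH =
     F_ast MG MH
     \<union> {{(u,h),(u,h')} | u h h'. u \<in> unmatched VG MG \<and> {h,h'} \<in> MH}
     \<union> {{(g,u),(g',u)} | g g' u. u \<in> unmatched VH MH \<and> {g,g'} \<in> MG}"

definition weak_hom_preserving ::
  "'a set \<Rightarrow> 'a set set \<Rightarrow> 'b set \<Rightarrow> 'b set set \<Rightarrow> ('a \<times> 'b) set set \<Rightarrow> bool" where
  "weak_hom_preserving VG MG VH MH M \<longleftrightarrow>
     (\<forall>e\<in>M. \<forall>x y. e = {x, y} \<longrightarrow>
        (if fst x = fst y then fst x \<in> VG else {fst x, fst y} \<in> MG) \<and>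
        (if snd x = snd y then snd x \<in> VH else {snd x, snd y} \<in> MH))"

definition W_k :: "nat \<Rightarrow> product_kind \<Rightarrow>
    'a set \<Rightarrow> 'a set set \<Rightarrow> 'b set \<Rightarrow> 'b set set \<Rightarrow>
    'a set set \<Rightarrow> 'b set set \<Rightarrow> ('a \<times> 'b) set set set" where
  "W_k k star VG EG VH EH MG MH =
     {M. k_matching k (VG \<times> VH) (prod_edges star VG EG VH EH) M \<and>
         weak_hom_preserving VG MG VH MH M}"

end

theory Submission
  imports Defs
begin

text \<open>Treat an unmatched vertex as its own partner. Then F_circ consists exactly of the
  pairs {x, y}, x \<noteq> y, of product vertices whose coordinates are partners, so the
  F_circ-degree of (g, h) is the product of the partner counts of g and h, minus one when both
  are unmatched. Hence F_circ leaves exactly U_G \<times> U_H unmatched, whereas no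
  weak-homomorphism preserving edge can touch U_G \<times> U_H: its projections would be matching
  edges at unmatched vertices. As a k-matching M on V has 2 |M| = k |V - U_M| edges, F_circ is
  maximum in W_k whenever it is a k-matching, with k/2 (n_G n_H - u_G u_H) edges; under
  (M1)-(M4) the degree formula only takes the values 0 and k.\<close>

lemma graph_edgeE:
  assumes "graph V E" "e \<in> E"
  obtains a b where "a \<noteq> b" "a \<in> V" "b \<in> V" "e = {a, b}"
  using assms unfolding graph_def by blast

lemma graph_edge_doubleton:
  assumes "graph V E" "{a, b} \<in> E"
  shows "a \<noteq> b" "a \<in> V" "b \<in> V"
  using graph_edgeE[OF assms] by (metis doubleton_eq_iff)+

lemma graph_no_loop:
  assumes "graph V E"
  shows "{a} \<notin> E"
  using graph_edge_doubleton(1)[OF assms, of a a] by auto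

lemma graph_edge_other_end:
  assumes "graph V E" "e \<in> E" "x \<in> e"
  obtains y where "y \<noteq> x" "e = {x, y}"
proof -
  obtain a b where "a \<noteq> b" "e = {a, b}" using graph_edgeE[OF assms(1,2)] by blast
  with assms(3) that show thesis by (metis insert_commute insertE singletonD)
qed

lemma card_k_matching:
  assumes G: "graph V E" and M: "k_matching k V E M"
  shows "2 * card M = k * card (V - unmatched V M)"
proof -
  have "M \<subseteq> E" using M unfolding k_matching_def by simp
  have edge: "e \<subseteq> V \<and> card e = 2" if "e \<in> M" for e
    using graph_edgeE[OF G, of e] that \<open>M \<subseteq> E\<close> by (metis card_2_iff empty_subsetI insert_subset subsetD)
  have fin: "finite M"
    using G edge unfolding graph_def by (intro finite_subset[of M "Pow V"]) auto
  have "(\<Sum>v\<in>V. card {e\<in>M. v \<in> e}) = (\<Sum>v\<in>V. \<Sum>e\<in>M. if v \<in> e then 1 else 0)"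
    using fin by (simp add: sum.inter_filter[symmetric])
  also have "\<dots> = (\<Sum>e\<in>M. \<Sum>v\<in>V. if v \<in> e then 1 else 0)"
    by (rule sum.swap)
  also have "\<dots> = (\<Sum>e\<in>M. card {v\<in>V. v \<in> e})"
    using G unfolding graph_def by (simp add: sum.inter_filter[symmetric])
  also have "\<dots> = (\<Sum>e\<in>M. 2)"
    using edge by (intro sum.cong) (auto simp: Int_absorb1 Collect_conj_eq)
  finally have "(\<Sum>v\<in>V. card {e\<in>M. v \<in> e}) = 2 * card M" by simp
  moreover have "card {e\<in>M. v \<in> e} = (if v \<in> unmatched V M then 0 else k)" if "v \<in> V" for v
    using M that fin unfolding k_matching_def unmatched_def by auto
  then have "(\<Sum>v\<in>V. card {e\<in>M. v \<in> e}) = k * card (V - unmatched V M)"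
    using G unfolding graph_def by (simp add: sum.If_cases Diff_eq Int_commute)
  ultimately show ?thesis by simp
qed

lemma prod_edgesE:
  assumes "e \<in> prod_edges star VG EG VH EH"
  obtains g h g' h' where "e = {(g, h), (g', h')}" "g \<in> VG" "g' \<in> VG" "h \<in> VH" "h' \<in> VH"
    "{g, g'} \<in> EG \<or> {h, h'} \<in> EH"
  using assms by (cases star) (auto simp: strong_edges_def lex_edges_def)

lemma prod_edgesI:
  assumes "g \<in> VG" "g' \<in> VG" "h \<in> VH" "h' \<in> VH"
    and "(g = g' \<and> {h, h'} \<in> EH) \<or> ({g, g'} \<in> EG \<and> (h = h' \<or> {h, h'} \<in> EH))"
  shows "{(g, h), (g', h')} \<in> prod_edges star VG EG VH EH"
  using assms by (cases star) (simp_all add: strong_edges_def lex_edges_def; blast)+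

lemma graph_prod_edges:
  assumes G: "graph VG EG" and H: "graph VH EH"
  shows "graph (VG \<times> VH) (prod_edges star VG EG VH EH)"
  unfolding graph_def
proof (intro conjI ballI)
  show "finite (VG \<times> VH)" "VG \<times> VH \<noteq> {}" using G H unfolding graph_def by auto
next
  fix e assume "e \<in> prod_edges star VG EG VH EH"
  then obtain g h g' h' where e: "e = {(g, h), (g', h')}" "g \<in> VG" "g' \<in> VG" "h \<in> VH" "h' \<in> VH"
    and "{g, g'} \<in> EG \<or> {h, h'} \<in> EH"
    by (rule prod_edgesE)
  then have "(g, h) \<noteq> (g', h')"
    using graph_edge_doubleton(1)[OF G] graph_edge_doubleton(1)[OF H] by auto
  with e show "\<exists>x y. x \<noteq> y \<and> x \<in> VG \<times> VH \<and> y \<in> VG \<times> VH \<and> e = {x, y}" by blast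
qed

definition partners :: "'a set \<Rightarrow> 'a set set \<Rightarrow> 'a \<Rightarrow> 'a set" where
  "partners V M g = {g'. {g, g'} \<in> M} \<union> {g'. g' = g \<and> g \<in> unmatched V M}"

lemma partners_sym: "g' \<in> partners V M g \<longleftrightarrow> g \<in> partners V M g'"
  unfolding partners_def by (auto simp: insert_commute)

lemma mem_partners_iff:
  assumes "graph V E" "M \<subseteq> E"
  shows "g' \<in> partners V M g \<longleftrightarrow> (if g' = g then g \<in> unmatched V M else {g, g'} \<in> M)"
  using graph_no_loop[OF assms(1), of g] assms(2) unfolding partners_def by auto

lemma mem_partnersD:
  assumes "graph V E" "M \<subseteq> E" "g' \<in> partners V M g"
  shows "if g = g' then g \<in> V else {g, g'} \<in> M"
  using assms(3) unfolding mem_partners_iff[OF assms(1,2)] unmatched_def by auto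

lemma partners_subset:
  assumes "graph V E" "M \<subseteq> E"
  shows "partners V M g \<subseteq> V"
  using graph_edge_doubleton(3)[OF assms(1)] assms(2)
  unfolding partners_def unmatched_def by auto

lemma finite_partners:
  assumes "graph V E" "M \<subseteq> E"
  shows "finite (partners V M g)"
  using partners_subset[OF assms] assms(1) unfolding graph_def by (meson finite_subset)

lemma partners_nonempty:
  assumes "graph V E" "M \<subseteq> E" "g \<in> V"
  shows "partners V M g \<noteq> {}"
proof (cases "g \<in> unmatched V M")
  case False
  then obtain e where "e \<in> M" "g \<in> e" using assms(3) unfolding unmatched_def by auto
  then obtain g' where "e = {g, g'}" using graph_edge_other_end[OF assms(1)] assms(2) by blast
  with \<open>e \<in> M\<close> show ?thesis unfolding partners_def by auto
qed (simp add: partners_def)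

lemma partners_eq_singleton_iff:
  assumes "graph V E" "M \<subseteq> E" "g \<in> V"
  shows "partners V M g = {g} \<longleftrightarrow> g \<in> unmatched V M"
proof
  assume self: "partners V M g = {g}"
  show "g \<in> unmatched V M"
  proof (rule ccontr)
    assume "g \<notin> unmatched V M"
    then obtain e where "e \<in> M" "g \<in> e" using assms(3) unfolding unmatched_def by auto
    then obtain g' where "g' \<noteq> g" "{g, g'} \<in> M"
      using graph_edge_other_end[OF assms(1)] assms(2) by (metis subsetD)
    then show False using self unfolding partners_def by auto
  qed
qed (auto simp: partners_def unmatched_def)

lemma card_partners:
  assumes "graph V E" "M \<subseteq> E" "g \<in> V"
  shows "card (partners V M g) = (if g \<in> unmatched V M then 1 else card {e\<in>M. g \<in> e})"
proof (cases "g \<in> unmatched V M")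
  case True
  then show ?thesis using partners_eq_singleton_iff[OF assms] by simp
next
  case False
  have "bij_betw (\<lambda>g'. {g, g'}) (partners V M g) {e\<in>M. g \<in> e}"
  proof (rule bij_betwI')
    fix e assume "e \<in> {e\<in>M. g \<in> e}"
    then obtain g' where "e = {g, g'}" "e \<in> M"
      using graph_edge_other_end[OF assms(1)] assms(2) by blast
    then show "\<exists>g'\<in>partners V M g. e = {g, g'}" unfolding partners_def by auto
  qed (use False in \<open>auto simp: partners_def doubleton_eq_iff\<close>)
  then show ?thesis using False by (simp add: bij_betw_same_card)
qed

lemma card_partners_k_matching:
  assumes "graph V E" "k_matching k V E M" "g \<in> V"
  shows "card (partners V M g) = (if g \<in> unmatched V M then 1 else k)"
proof -
  have "M \<subseteq> E" using assms(2) unfolding k_matching_def by simp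
  then have "card (partners V M g) \<noteq> 0"
    using partners_nonempty[OF assms(1) _ assms(3)] finite_partners[OF assms(1)] by simp
  then show ?thesis
    using card_partners[OF assms(1) \<open>M \<subseteq> E\<close> assms(3)] assms(2,3)
    unfolding k_matching_def by (auto split: if_splits)
qed

lemma F_circ_eq:
  assumes G: "graph VG EG" and H: "graph VH EH" and MG: "MG \<subseteq> EG" and MH: "MH \<subseteq> EH"
  shows "F_circ VG MG VH MH = {{x, y} | x y. x \<noteq> y \<and>
           fst y \<in> partners VG MG (fst x) \<and> snd y \<in> partners VH MH (snd x)}"
    (is "_ = ?P")
proof
  have in_P: "{x, y} \<in> ?P"
    if "x \<noteq> y" "fst y \<in> partners VG MG (fst x)" "snd y \<in> partners VH MH (snd x)" for x y
    using that by blast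
  show "F_circ VG MG VH MH \<subseteq> ?P"
  proof
    fix e assume "e \<in> F_circ VG MG VH MH"
    then consider
        (both) g h g' h' where "e = {(g, h), (g', h')}" "{g, g'} \<in> MG" "{h, h'} \<in> MH"
      | (unmatched_G) u h h' where "e = {(u, h), (u, h')}" "u \<in> unmatched VG MG" "{h, h'} \<in> MH"
      | (unmatched_H) g g' u where "e = {(g, u), (g', u)}" "u \<in> unmatched VH MH" "{g, g'} \<in> MG"
      unfolding F_circ_def F_ast_def by blast
    then show "e \<in> ?P"
    proof cases
      case both
      then have "g \<noteq> g'" "h \<noteq> h'"
        using graph_no_loop[OF G] graph_no_loop[OF H] MG MH by auto
      with both have "g' \<in> partners VG MG g" "h' \<in> partners VH MH h"
        by (simp_all add: mem_partners_iff[OF G MG] mem_partners_iff[OF H MH])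
      with \<open>g \<noteq> g'\<close> show ?thesis unfolding both(1) by (intro in_P) simp_all
    next
      case unmatched_G
      then have "h \<noteq> h'" using graph_no_loop[OF H] MH by auto
      with unmatched_G have "u \<in> partners VG MG u" "h' \<in> partners VH MH h"
        by (simp_all add: mem_partners_iff[OF G MG] mem_partners_iff[OF H MH])
      with \<open>h \<noteq> h'\<close> show ?thesis unfolding unmatched_G(1) by (intro in_P) simp_all
    next
      case unmatched_H
      then have "g \<noteq> g'" using graph_no_loop[OF G] MG by auto
      with unmatched_H have "g' \<in> partners VG MG g" "u \<in> partners VH MH u"
        by (simp_all add: mem_partners_iff[OF G MG] mem_partners_iff[OF H MH])
      with \<open>g \<noteq> g'\<close> show ?thesis unfolding unmatched_H(1) by (intro in_P) simp_all
    qed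
  qed
next
  show "?P \<subseteq> F_circ VG MG VH MH"
  proof
    fix e assume "e \<in> ?P"
    then obtain g h g' h' where e: "e = {(g, h), (g', h')}" "(g, h) \<noteq> (g', h')"
      and "g' \<in> partners VG MG g" "h' \<in> partners VH MH h" by auto
    then have g': "if g' = g then g \<in> unmatched VG MG else {g, g'} \<in> MG"
      and h': "if h' = h then h \<in> unmatched VH MH else {h, h'} \<in> MH"
      by (simp_all add: mem_partners_iff[OF G MG] mem_partners_iff[OF H MH])
    show "e \<in> F_circ VG MG VH MH"
    proof (cases "g' = g")
      case True
      with e g' h' show ?thesis unfolding F_circ_def by auto
    next
      case False
      with e g' h' show ?thesis unfolding F_circ_def F_ast_def by (cases "h' = h") auto
    qed
  qed
qed

lemma F_circ_incident:
  assumes "graph VG EG" "graph VH EH" "MG \<subseteq> EG" "MH \<subseteq> EH"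
  shows "{e \<in> F_circ VG MG VH MH. x \<in> e} =
           (\<lambda>y. {x, y}) ` (partners VG MG (fst x) \<times> partners VH MH (snd x) - {x})"
proof (intro set_eqI iffI)
  fix e assume "e \<in> {e \<in> F_circ VG MG VH MH. x \<in> e}"
  then obtain a b where e: "e = {a, b}" "a \<noteq> b" "x \<in> e"
    and ab: "fst b \<in> partners VG MG (fst a)" "snd b \<in> partners VH MH (snd a)"
    unfolding F_circ_eq[OF assms] by blast
  show "e \<in> (\<lambda>y. {x, y}) ` (partners VG MG (fst x) \<times> partners VH MH (snd x) - {x})"
  proof (cases "x = a")
    case True
    with e ab show ?thesis by (intro rev_image_eqI[of b]) (auto simp: mem_Times_iff)
  next
    case False
    then have "x = b" "e = {x, a}" using e by auto
    moreover have "fst a \<in> partners VG MG (fst x)" "snd a \<in> partners VH MH (snd x)"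
      using ab \<open>x = b\<close> by (simp_all add: partners_sym)
    ultimately show ?thesis using e(2) by (intro rev_image_eqI[of a]) (auto simp: mem_Times_iff)
  qed
next
  fix e assume "e \<in> (\<lambda>y. {x, y}) ` (partners VG MG (fst x) \<times> partners VH MH (snd x) - {x})"
  then obtain y where "e = {x, y}" "y \<noteq> x"
    "fst y \<in> partners VG MG (fst x)" "snd y \<in> partners VH MH (snd x)"
    by force
  then show "e \<in> {e \<in> F_circ VG MG VH MH. x \<in> e}"
    unfolding F_circ_eq[OF assms] by blast
qed

lemma card_F_circ_incident:
  assumes G: "graph VG EG" and H: "graph VH EH" and MG: "MG \<subseteq> EG" and MH: "MH \<subseteq> EH"
  shows "card {e \<in> F_circ VG MG VH MH. (g, h) \<in> e} =
           card (partners VG MG g) * card (partners VH MH h)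
           - (if g \<in> unmatched VG MG \<and> h \<in> unmatched VH MH then 1 else 0)"
proof -
  have "inj_on (\<lambda>y. {(g, h), y}) X" for X
    by (rule inj_onI) (auto simp: doubleton_eq_iff)
  moreover have "(g, h) \<in> partners VG MG g \<times> partners VH MH h \<longleftrightarrow>
                   g \<in> unmatched VG MG \<and> h \<in> unmatched VH MH"
    by (simp add: mem_partners_iff[OF G MG] mem_partners_iff[OF H MH])
  ultimately show ?thesis
    unfolding F_circ_incident[OF assms]
    by (simp add: card_image card_Diff_singleton_if card_cartesian_product
        finite_partners[OF G MG] finite_partners[OF H MH])
qed

lemma unmatched_F_circ:
  assumes G: "graph VG EG" and H: "graph VH EH" and MG: "MG \<subseteq> EG" and MH: "MH \<subseteq> EH"
  shows "unmatched (VG \<times> VH) (F_circ VG MG VH MH) = unmatched VG MG \<times> unmatched VH MH"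
proof (intro set_eqI)
  fix x
  show "x \<in> unmatched (VG \<times> VH) (F_circ VG MG VH MH) \<longleftrightarrow> x \<in> unmatched VG MG \<times> unmatched VH MH"
  proof (cases "x \<in> VG \<times> VH")
    case True
    then obtain g h where x: "x = (g, h)" and g: "g \<in> VG" and h: "h \<in> VH" by blast
    have "x \<in> unmatched (VG \<times> VH) (F_circ VG MG VH MH) \<longleftrightarrow>
          {e \<in> F_circ VG MG VH MH. (g, h) \<in> e} = {}"
      using True unfolding unmatched_def x by auto
    also have "\<dots> \<longleftrightarrow> partners VG MG g \<times> partners VH MH h \<subseteq> {(g, h)}"
      unfolding F_circ_incident[OF assms] by auto
    also have "\<dots> \<longleftrightarrow> partners VG MG g = {g} \<and> partners VH MH h = {h}"
      using partners_nonempty[OF G MG g] partners_nonempty[OF H MH h] by blast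
    also have "\<dots> \<longleftrightarrow> x \<in> unmatched VG MG \<times> unmatched VH MH"
      unfolding x partners_eq_singleton_iff[OF G MG g] partners_eq_singleton_iff[OF H MH h] by simp
    finally show ?thesis .
  qed (auto simp: unmatched_def)
qed

lemma F_circ_subset_prod_edges:
  assumes G: "graph VG EG" and H: "graph VH EH" and MG: "MG \<subseteq> EG" and MH: "MH \<subseteq> EH"
  shows "F_circ VG MG VH MH \<subseteq> prod_edges star VG EG VH EH"
proof
  fix e assume "e \<in> F_circ VG MG VH MH"
  then obtain g h g' h' where e: "e = {(g, h), (g', h')}" "(g, h) \<noteq> (g', h')"
    and g': "g' \<in> partners VG MG g" and h': "h' \<in> partners VH MH h"
    unfolding F_circ_eq[OF assms] by auto
  have "g \<in> partners VG MG g'" "h \<in> partners VH MH h'"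
    using g' h' by (simp_all add: partners_sym)
  with g' h' have "if g = g' then g \<in> VG else {g, g'} \<in> MG"
    and "if h = h' then h \<in> VH else {h, h'} \<in> MH"
    and "{g, g'} \<subseteq> VG" "{h, h'} \<subseteq> VH"
    using mem_partnersD[OF G MG] mem_partnersD[OF H MH]
      partners_subset[OF G MG] partners_subset[OF H MH] by blast+
  with e(2) MG MH show "e \<in> prod_edges star VG EG VH EH"
    unfolding e(1) by (intro prod_edgesI) (auto split: if_splits)
qed

lemma weak_hom_preserving_F_circ:
  assumes G: "graph VG EG" and H: "graph VH EH" and MG: "MG \<subseteq> EG" and MH: "MH \<subseteq> EH"
  shows "weak_hom_preserving VG MG VH MH (F_circ VG MG VH MH)"
  unfolding weak_hom_preserving_def
proof (intro ballI allI impI)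
  fix e x y assume "e \<in> F_circ VG MG VH MH" "e = {x, y}"
  then obtain a b where xy: "{x, y} = {a, b}"
    and ab: "fst b \<in> partners VG MG (fst a)" "snd b \<in> partners VH MH (snd a)"
    unfolding F_circ_eq[OF assms] by auto
  have "fst y \<in> partners VG MG (fst x) \<and> snd y \<in> partners VH MH (snd x)"
  proof (cases "x = a")
    case False
    with xy have "x = b" "y = a" by (auto simp: doubleton_eq_iff)
    with ab show ?thesis by (metis partners_sym)
  next
    case True
    with xy have "y = b" by (auto simp: doubleton_eq_iff)
    with ab True show ?thesis by simp
  qed
  then show "(if fst x = fst y then fst x \<in> VG else {fst x, fst y} \<in> MG) \<and>
             (if snd x = snd y then snd x \<in> VH else {snd x, snd y} \<in> MH)"
    using mem_partnersD[OF G MG, of "fst y" "fst x"] mem_partnersD[OF H MH, of "snd y" "snd x"]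
    by simp
qed

lemma k_matching_F_circ:
  assumes G: "graph VG EG" and H: "graph VH EH" and MG: "MG \<subseteq> EG" and MH: "MH \<subseteq> EH"
    and cond: "(perfect_k_matching k VG EG MG \<and> k_matching 1 VH EH MH \<and> MH \<noteq> {})
       \<or> (k_matching k VG EG MG \<and> MG \<noteq> {} \<and> MH = {})
       \<or> (k_matching 1 VG EG MG \<and> MG \<noteq> {} \<and> perfect_k_matching k VH EH MH)
       \<or> (MG = {} \<and> k_matching k VH EH MH \<and> MH \<noteq> {})
       \<or> (k = 1 \<and> k_matching 1 VG EG MG \<and> k_matching 1 VH EH MH)
       \<or> (\<exists>kG kH. kG > 0 \<and> kH > 0 \<and> kG * kH = k \<and>
             perfect_k_matching kG VG EG MG \<and> perfect_k_matching kH VH EH MH)"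
  shows "k_matching k (VG \<times> VH) (prod_edges star VG EG VH EH) (F_circ VG MG VH MH)"
  unfolding k_matching_def
proof (intro conjI ballI F_circ_subset_prod_edges[OF assms(1-4)])
  fix x assume "x \<in> VG \<times> VH"
  then obtain g h where x: "x = (g, h)" and g: "g \<in> VG" and h: "h \<in> VH" by blast
  define a b where "a = card (partners VG MG g)" and "b = card (partners VH MH h)"
  have degree: "card {e \<in> F_circ VG MG VH MH. x \<in> e} =
                  a * b - (if g \<in> unmatched VG MG \<and> h \<in> unmatched VH MH then 1 else 0)"
    unfolding x a_def b_def by (rule card_F_circ_incident[OF assms(1-4)])
  have "g \<in> unmatched VG MG \<Longrightarrow> a = 1" "h \<in> unmatched VH MH \<Longrightarrow> b = 1"
    unfolding a_def b_def using card_partners[OF G MG g] card_partners[OF H MH h] by simp_all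
  moreover have "k_matching k' VG EG MG \<Longrightarrow> g \<notin> unmatched VG MG \<Longrightarrow> a = k'"
    and "k_matching k' VH EH MH \<Longrightarrow> h \<notin> unmatched VH MH \<Longrightarrow> b = k'" for k'
    unfolding a_def b_def using card_partners_k_matching[OF G _ g] card_partners_k_matching[OF H _ h]
    by simp_all
  moreover have "MG = {} \<Longrightarrow> g \<in> unmatched VG MG" "MH = {} \<Longrightarrow> h \<in> unmatched VH MH"
    using g h unfolding unmatched_def by auto
  ultimately show "card {e \<in> F_circ VG MG VH MH. x \<in> e} = 0 \<or>
                   card {e \<in> F_circ VG MG VH MH. x \<in> e} = k"
    using cond unfolding degree perfect_k_matching_def
    by (elim disjE conjE exE) (auto simp: g h)
qed

lemma weak_hom_preservingD:
  assumes "weak_hom_preserving VG MG VH MH M" "{x, y} \<in> M"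
  shows "(if fst x = fst y then fst x \<in> VG else {fst x, fst y} \<in> MG) \<and>
         (if snd x = snd y then snd x \<in> VH else {snd x, snd y} \<in> MH)"
  using assms unfolding weak_hom_preserving_def by blast

lemma unmatched_W_k:
  assumes G: "graph VG EG" and H: "graph VH EH" and M: "M \<in> W_k k star VG EG VH EH MG MH"
  shows "unmatched VG MG \<times> unmatched VH MH \<subseteq> unmatched (VG \<times> VH) M"
proof (rule subsetI, rule ccontr)
  fix x assume x: "x \<in> unmatched VG MG \<times> unmatched VH MH"
    and "x \<notin> unmatched (VG \<times> VH) M"
  then obtain e where e: "e \<in> M" "x \<in> e" unfolding unmatched_def by auto
  have "e \<in> prod_edges star VG EG VH EH" and weak: "weak_hom_preserving VG MG VH MH M"
    using M e(1) unfolding W_k_def k_matching_def by auto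
  then obtain y where y: "y \<noteq> x" "e = {x, y}"
    using graph_edge_other_end[OF graph_prod_edges[OF G H]] e(2) by blast
  have "(if fst x = fst y then fst x \<in> VG else {fst x, fst y} \<in> MG) \<and>
        (if snd x = snd y then snd x \<in> VH else {snd x, snd y} \<in> MH)"
    using weak_hom_preservingD[OF weak, of x y] e(1) y(2) by simp
  with x have "fst y = fst x" "snd y = snd x" unfolding unmatched_def by (auto split: if_splits)
  with y(1) show False by (simp add: prod_eq_iff)
qed

lemma card_W_k_le:
  assumes G: "graph VG EG" and H: "graph VH EH" and M: "M \<in> W_k k star VG EG VH EH MG MH"
  shows "2 * card M \<le> k * card (VG \<times> VH - unmatched VG MG \<times> unmatched VH MH)"
proof -
  have "2 * card M = k * card (VG \<times> VH - unmatched (VG \<times> VH) M)"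
    using M card_k_matching[OF graph_prod_edges[OF G H]] unfolding W_k_def by blast
  also have "\<dots> \<le> k * card (VG \<times> VH - unmatched VG MG \<times> unmatched VH MH)"
    using unmatched_W_k[OF G H M] G H unfolding graph_def by (intro mult_le_mono2 card_mono) auto
  finally show ?thesis .
qed

lemma F_circ_in_W_k:
  assumes "graph VG EG" "graph VH EH" "MG \<subseteq> EG" "MH \<subseteq> EH"
    and "k_matching k (VG \<times> VH) (prod_edges star VG EG VH EH) (F_circ VG MG VH MH)"
  shows "F_circ VG MG VH MH \<in> W_k k star VG EG VH EH MG MH"
  using assms(5) weak_hom_preserving_F_circ[OF assms(1-4)] unfolding W_k_def by simp

lemma card_F_circ:
  assumes "graph VG EG" "graph VH EH" "MG \<subseteq> EG" "MH \<subseteq> EH"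
    and "k_matching k (VG \<times> VH) (prod_edges star VG EG VH EH) (F_circ VG MG VH MH)"
  shows "2 * card (F_circ VG MG VH MH) = k * card (VG \<times> VH - unmatched VG MG \<times> unmatched VH MH)"
  using card_k_matching[OF graph_prod_edges[OF assms(1,2)] assms(5)]
  unfolding unmatched_F_circ[OF assms(1-4)] .

lemma real_card_Times_Diff_Times:
  assumes "finite A" "finite B" "C \<subseteq> A" "D \<subseteq> B"
  shows "real (card (A \<times> B - C \<times> D)) = real (card A) * real (card B) - real (card C) * real (card D)"
proof -
  have "C \<times> D \<subseteq> A \<times> B" using assms(3,4) by auto
  moreover have "card C * card D \<le> card A * card B"
    using assms by (intro mult_le_mono card_mono)
  ultimately show ?thesis
    using assms by (simp add: card_Diff_subset finite_subset card_cartesian_product of_nat_diff)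
qed

theorem mainTheorem15:
  fixes star :: product_kind and k :: nat
    and VG :: "'a set" and EG MG :: "'a set set"
    and VH :: "'b set" and EH MH :: "'b set set"
  assumes "k > 0"
    and "graph VG EG" and "graph VH EH"
    and "MG \<subseteq> EG" and "MH \<subseteq> EH"
  shows
    "(k_matching k (VG \<times> VH) (prod_edges star VG EG VH EH) (F_circ VG MG VH MH) \<longrightarrow>
        F_circ VG MG VH MH \<in> W_k k star VG EG VH EH MG MH \<and>
        (\<forall>M \<in> W_k k star VG EG VH EH MG MH. card (F_circ VG MG VH MH) \<ge> card M))
     \<and>
     ((  (perfect_k_matching k VG EG MG \<and> k_matching 1 VH EH MH \<and> MH \<noteq> {})
       \<or> (k_matching k VG EG MG \<and> MG \<noteq> {} \<and> MH = {})
       \<or> (k_matching 1 VG EG MG \<and> MG \<noteq> {} \<and> perfect_k_matching k VH EH MH)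
       \<or> (MG = {} \<and> k_matching k VH EH MH \<and> MH \<noteq> {})
       \<or> (k = 1 \<and> k_matching 1 VG EG MG \<and> k_matching 1 VH EH MH)
       \<or> (\<exists>kG kH. kG > 0 \<and> kH > 0 \<and> kG * kH = k \<and>
             perfect_k_matching kG VG EG MG \<and> perfect_k_matching kH VH EH MH))
      \<longrightarrow> (\<forall>Mstar \<in> W_k k star VG EG VH EH MG MH.
             (\<forall>M \<in> W_k k star VG EG VH EH MG MH. card M \<le> card Mstar) \<longrightarrow>
             real (card Mstar) = real k / 2 *
               (real (card VG) * real (card VH)
                - real (card (unmatched VG MG)) * real (card (unmatched VH MH)))))"
  (is "(?F_matching \<longrightarrow> _) \<and> (?conditions \<longrightarrow> _)")
proof -
  let ?F = "F_circ VG MG VH MH" and ?W = "W_k k star VG EG VH EH MG MH"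
  note graphs = assms(2-5)
  show ?thesis
  proof (intro conjI impI ballI)
    fix M assume ?F_matching "M \<in> ?W"
    then show "card M \<le> card ?F"
      using card_W_k_le[OF assms(2,3)] card_F_circ[OF graphs] by fastforce
  next
    assume ?F_matching then show "?F \<in> ?W" by (rule F_circ_in_W_k[OF graphs])
  next
    fix Mstar assume ?conditions "Mstar \<in> ?W" and maximum: "\<forall>M\<in>?W. card M \<le> card Mstar"
    then have F: ?F_matching using k_matching_F_circ[OF graphs] by blast
    have "card ?F \<le> card Mstar" using maximum F_circ_in_W_k[OF graphs F] by blast
    then have "card Mstar = card ?F"
      using card_W_k_le[OF assms(2,3) \<open>Mstar \<in> ?W\<close>] card_F_circ[OF graphs F] by linarith
    then have "real (2 * card Mstar) =
        real k * real (card (VG \<times> VH - unmatched VG MG \<times> unmatched VH MH))"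
      using card_F_circ[OF graphs F] by (simp only: of_nat_mult)
    with assms(2,3) show "real (card Mstar) = real k / 2 *
               (real (card VG) * real (card VH)
                - real (card (unmatched VG MG)) * real (card (unmatched VH MH)))"
      unfolding graph_def by (simp add: real_card_Times_Diff_Times unmatched_def)
  qed
qed

end
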